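(* Assume separability and full support, and let $\mu$ be the group-level matching patterns of the stable outcome for surplus $\Phi$ and margins $\bm r$, and $(\bm U,\bm V)$ the solution of $\min_{\bm U,\bm V}\{G(\bm U,\bm n)+H(\bm V,\bm m):U_{xy}+V_{xy}\ge\Phi_{xy}\ \forall x,y\}$. Then: 1. $\bm U=\frac{\partial G^*}{\partial\mu}(\mu,\bm n)$ and $\bm V=\frac{\partial H^*}{\partial\mu}(\mu,\bm m)$; 2. $U_{xy}+V_{xy}=\Phi_{xy}$ for every $x\in\mathcal X,y\in\mathcal Y$, and consequently $$\Phi_{xy}=-\frac{\partial\mathcal E}{\partial\mu_{xy}}(\mu,\bm r)=\frac{\partial G_x^*}{\partial\mu_{y|x}}(\mu_{\cdot|x})+\frac{\partial H_y^*}{\partial\mu_{x|y}}(\mu_{\cdot|y}),$$ where $\mu_{y|x}=\mu_{xy}/n_x$, $\mu_{x|y}=\mu_{xy}/m_y$, $\mu_{\cdot|x}=(\mu_{y|x})_{y\in\mathcal Y}$ and $\mu_{\cdot|y}=(\mu_{x|y})_{x\in\mathcal X}$.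
   Context: Setting. $\mathcal X$ and $\mathcal Y$ are finite nonempty sets (groups of men and of women); $\mathcal X_0=\mathcal X\cup\{0\}$, $\mathcal Y_0=\mathcal Y\cup\{0\}$, where $0$ stands for singlehood. There is a continuum of men and of women: $n_x>0$ is the mass of men of group $x$, $m_y>0$ the mass of women of group $y$, and $\bm r=(\bm n,\bm m)$. Each man $i$ has a group $x_i\in\mathcal X$ and a vector $\varepsilon_i=(\varepsilon_{iy})_{y\in\mathcal Y_0}\in\mathbb R^{\mathcal Y_0}$ whose distribution among men of group $x$ is $P_x$; each woman $j$ has a group $y_j\in\mathcal Y$ and a vector $\eta_j=(\eta_{xj})_{x\in\mathcal X_0}\in\mathbb R^{\mathcal X_0}$ whose distribution among women of group $y$ is $Q_y$. Utility is perfectly transferable. Separability: there is a matrix $\Phi=(\Phi_{xy})_{x\in\mathcal X,y\in\mathcal Y}$ such that the joint surplus of a match between man $i$ and woman $j$ is $\tilde\Phi_{ij}=\Phi_{x_iy_j}+\varepsilon_{iy_j}+\eta_{x_ij}$, the utility of a single man $i$ is $\varepsilon_{i0}$ and that of a single woman $j$ is $\eta_{0j}$; moreover $\max_{y\in\mathcal Y_0}|\varepsilon_y|$ has finite expectation under each $P_x$ and $\max_{x\in\mathcal X_0}|\eta_x|$ has finite expectation under each $Q_y$. Full support: each $P_x$ has full support on $\mathbb R^{\mathcal Y_0}$ and each $Q_y$ on $\mathbb R^{\mathcal X_0}$, and all are absolutely continuous with respect to Lebesgue measure. A stable outcome is an assignment in which each individual has at most one partner, together with utilities $\tilde u_i,\tilde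 v_j$ such that $\tilde u_i\ge\varepsilon_{i0}$ with equality if $i$ is single, $\tilde v_j\ge\eta_{0j}$ with equality if $j$ is single, and $\tilde u_i+\tilde v_j\ge\tilde\Phi_{ij}$ for all $i,j$, with equality if $i$ and $j$ are matched together. At the group level a matching is $\mu=(\mu_{xy})_{x\in\mathcal X,y\in\mathcal Y}$, $\mu_{xy}$ the mass of couples formed by a man of group $x$ and a woman of group $y$. Emax functions: for $\bm U=(U_{xy})\in\mathbb R^{\mathcal X\times\mathcal Y}$ with the convention $U_{x0}=0$, $G_x(U_{x\cdot})=\mathbb E_{\varepsilon\sim P_x}\max_{y\in\mathcal Y_0}(U_{xy}+\varepsilon_y)$ and $G(\bm U,\bm n)=\sum_{x}n_xG_x(U_{x\cdot})$; for $\bm V\in\mathbb R^{\mathcal X\times\mathcal Y}$ with $V_{0y}=0$, $H_y(V_{\cdot y})=\mathbb E_{\eta\sim Q_y}\max_{x\in\mathcal X_0}(V_{xy}+\eta_x)$ and $H(\bm V,\bm m)=\sum_y m_yH_y(V_{\cdot y})$. For $\nu\in\mathbb R^{\mathcal Y}$, $G_x^*(\nu)=\sup_{U\in\mathbb R^{\mathcal Y}}(\sum_y\nu_yU_y-G_x(U))$ if $\sum_y\nu_y\le1$ and $+\infty$ otherwise; $H_y^*$ is defined symmetrically on $\mathbb R^{\mathcal X}$. Legendre–Fenchel transforms: $G^*(\mu,\bm n)=\sup_{\bm U}\left(\sum_{x,y}\mu_{xy}U_{xy}-G(\bm U,\bm n)\right)=\sum_x n_xG_x^*(\mu_{x\cdot}/n_x)$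 and $H^*(\mu,\bm m)=\sup_{\bm V}\left(\sum_{x,y}\mu_{xy}V_{xy}-H(\bm V,\bm m)\right)=\sum_ym_yH_y^*(\mu_{\cdot y}/m_y)$. The generalized entropy of matching is $\mathcal E(\mu,\bm r)=-G^*(\mu,\bm n)-H^*(\mu,\bm m)$. *)

theory Defs
  imports "HOL-Probability.Probability"
begin

text \<open>Groups of men are elements of a finite type 'x, groups of women of a finite type 'y.
  Singlehood is None in 'y option / 'x option.  A man of group x has a heterogeneity vector
  e :: real^('y option) (e $ None is his singles utility), a woman of group y has
  h :: real^('x option).\<close>

definition emax_men :: "(real^('y::finite option)) measure \<Rightarrow> ('y \<Rightarrow> real) \<Rightarrow> real" where
  "emax_men P U = integral\<^sup>L P (\<lambda>e. Max (range (\<lambda>z. (case z of None \<Rightarrow> 0 | Some y \<Rightarrow> U y) + e $ z)))"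

definition emax_women :: "(real^('x::finite option)) measure \<Rightarrow> ('x \<Rightarrow> real) \<Rightarrow> real" where
  "emax_women Q V = integral\<^sup>L Q (\<lambda>h. Max (range (\<lambda>z. (case z of None \<Rightarrow> 0 | Some x \<Rightarrow> V x) + h $ z)))"

definition Gtot :: "('x::finite \<Rightarrow> real) \<Rightarrow> ('x \<Rightarrow> (real^('y::finite option)) measure)
    \<Rightarrow> ('x \<times> 'y \<Rightarrow> real) \<Rightarrow> real" where
  "Gtot n P U = (\<Sum>x\<in>UNIV. n x * emax_men (P x) (\<lambda>y. U (x, y)))"

definition Htot :: "('y::finite \<Rightarrow> real) \<Rightarrow> ('y \<Rightarrow> (real^('x::finite option)) measure)
    \<Rightarrow> ('x \<times> 'y \<Rightarrow> real) \<Rightarrow> real" where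
  "Htot m Q V = (\<Sum>y\<in>UNIV. m y * emax_women (Q y) (\<lambda>x. V (x, y)))"

definition Gstar_x :: "(real^('y::finite option)) measure \<Rightarrow> ('y \<Rightarrow> real) \<Rightarrow> ereal" where
  "Gstar_x P \<nu> = (if (\<Sum>y\<in>UNIV. \<nu> y) \<le> 1
      then Sup (range (\<lambda>U. ereal ((\<Sum>y\<in>UNIV. \<nu> y * U y) - emax_men P U))) else \<infinity>)"

definition Hstar_y :: "(real^('x::finite option)) measure \<Rightarrow> ('x \<Rightarrow> real) \<Rightarrow> ereal" where
  "Hstar_y Q \<nu> = (if (\<Sum>x\<in>UNIV. \<nu> x) \<le> 1
      then Sup (range (\<lambda>V. ereal ((\<Sum>x\<in>UNIV. \<nu> x * V x) - emax_women Q V))) else \<infinity>)"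

definition Gstar :: "('x::finite \<Rightarrow> real) \<Rightarrow> ('x \<Rightarrow> (real^('y::finite option)) measure)
    \<Rightarrow> ('x \<times> 'y \<Rightarrow> real) \<Rightarrow> ereal" where
  "Gstar n P \<mu> = Sup (range (\<lambda>U. ereal ((\<Sum>p\<in>UNIV. \<mu> p * U p) - Gtot n P U)))"

definition Hstar :: "('y::finite \<Rightarrow> real) \<Rightarrow> ('y \<Rightarrow> (real^('x::finite option)) measure)
    \<Rightarrow> ('x \<times> 'y \<Rightarrow> real) \<Rightarrow> ereal" where
  "Hstar m Q \<mu> = Sup (range (\<lambda>V. ereal ((\<Sum>p\<in>UNIV. \<mu> p * V p) - Htot m Q V)))"

definition entropy :: "('x::finite \<Rightarrow> real) \<Rightarrow> ('y::finite \<Rightarrow> real)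
    \<Rightarrow> ('x \<Rightarrow> (real^('y option)) measure) \<Rightarrow> ('y \<Rightarrow> (real^('x option)) measure)
    \<Rightarrow> ('x \<times> 'y \<Rightarrow> real) \<Rightarrow> ereal" where
  "entropy n m P Q \<mu> = - Gstar n P \<mu> - Hstar m Q \<mu>"

definition has_partial :: "(('a \<Rightarrow> real) \<Rightarrow> ereal) \<Rightarrow> ('a \<Rightarrow> real) \<Rightarrow> 'a \<Rightarrow> real \<Rightarrow> bool" where
  "has_partial f p k d \<longleftrightarrow>
     (\<forall>\<^sub>F t in nhds (p k). \<bar>f (p(k := t))\<bar> \<noteq> \<infinity>) \<and>
     ((\<lambda>t. real_of_ereal (f (p(k := t)))) has_real_derivative d) (at (p k))"

text \<open>Standing assumptions: separability (built into the model), integrability, full support,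
  absolute continuity.\<close>
definition heterogeneity_ok :: "('y::finite \<Rightarrow> real) \<Rightarrow> ('y \<Rightarrow> (real^('x::finite option)) measure) \<Rightarrow> bool" where
  "heterogeneity_ok w D \<longleftrightarrow> (\<forall>y. 0 < w y \<and> prob_space (D y) \<and> sets (D y) = sets borel
      \<and> absolutely_continuous lborel (D y)
      \<and> (\<forall>S. open S \<and> S \<noteq> {} \<longrightarrow> 0 < emeasure (D y) S)
      \<and> integrable (D y) (\<lambda>e. Max (range (\<lambda>z. \<bar>e $ z\<bar>))))"

text \<open>Individuals are identified with their types:
  a man is (x, e), a woman is (y, h); the population of men of group x is n x \<cdot> P x.
  An assignment is given by finite measures \<pi> x y on couples (e, h) of a man of group x and a
  woman of group y, such that no individual is matched more than once (marginal constraints).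
  Utilities u x e, v y h satisfy the stability inequalities, with equality for matched couples
  (a.e.) and for singles (a.e.: every man with u > e_0 is matched).\<close>
definition stable_outcome ::
  "('x::finite \<times> 'y::finite \<Rightarrow> real) \<Rightarrow> ('x \<Rightarrow> real) \<Rightarrow> ('y \<Rightarrow> real)
   \<Rightarrow> ('x \<Rightarrow> (real^('y option)) measure) \<Rightarrow> ('y \<Rightarrow> (real^('x option)) measure)
   \<Rightarrow> ('x \<Rightarrow> 'y \<Rightarrow> ((real^('y option)) \<times> (real^('x option))) measure)
   \<Rightarrow> ('x \<Rightarrow> real^('y option) \<Rightarrow> real) \<Rightarrow> ('y \<Rightarrow> real^('x option) \<Rightarrow> real) \<Rightarrow> bool" where
  "stable_outcome \<Phi> n m P Q \<pi> u v \<longleftrightarrow>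
     (\<forall>x y. finite_measure (\<pi> x y) \<and> sets (\<pi> x y) = sets borel)
   \<and> (\<forall>x A. A \<in> sets borel \<longrightarrow>
        (\<Sum>y\<in>UNIV. emeasure (\<pi> x y) (fst -` A)) \<le> ennreal (n x) * emeasure (P x) A)
   \<and> (\<forall>y B. B \<in> sets borel \<longrightarrow>
        (\<Sum>x\<in>UNIV. emeasure (\<pi> x y) (snd -` B)) \<le> ennreal (m y) * emeasure (Q y) B)
   \<and> (\<forall>x. u x \<in> borel_measurable borel) \<and> (\<forall>y. v y \<in> borel_measurable borel)
   \<and> (\<forall>x e. e $ None \<le> u x e) \<and> (\<forall>y h. h $ None \<le> v y h)
   \<and> (\<forall>x y e h. \<Phi> (x, y) + e $ Some y + h $ Some x \<le> u x e + v y h)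
   \<and> (\<forall>x y. AE p in \<pi> x y. u x (fst p) + v y (snd p) = \<Phi> (x, y) + fst p $ Some y + snd p $ Some x)
   \<and> (\<forall>x. ennreal (n x) * emeasure (P x) {e. e $ None < u x e}
          = (\<Sum>y\<in>UNIV. emeasure (\<pi> x y) (fst -` {e. e $ None < u x e})))
   \<and> (\<forall>y. ennreal (m y) * emeasure (Q y) {h. h $ None < v y h}
          = (\<Sum>x\<in>UNIV. emeasure (\<pi> x y) (snd -` {h. h $ None < v y h})))"

definition group_matching :: "('x \<Rightarrow> 'y \<Rightarrow> 'a measure) \<Rightarrow> ('x \<times> 'y \<Rightarrow> real)" where
  "group_matching \<pi> = (\<lambda>(x, y). measure (\<pi> x y) (space (\<pi> x y)))"

end

theory Submission
  imports Defs
begin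

text \<open>Stability with separable surplus splits \<open>\<Phi>\<close> into systematic utilities \<open>U + V = \<Phi>\<close> such
  that every matched man of group \<open>x\<close> gets \<open>U\<^sub>x\<^sub>y + \<epsilon>\<^sub>y\<close> for his partner's group \<open>y\<close>,
  and likewise for women.  Hence the men of group \<open>x\<close> matched to group \<open>y\<close> are exactly those for
  whom \<open>y\<close> is the best alternative under \<open>U\<^sub>x\<^sub>\<cdot>\<close>, so \<open>\<mu>\<^sub>x\<^sub>y / n\<^sub>x\<close> is a choice
  probability, which is a subgradient of the Emax function \<open>G\<^sub>x\<close> at \<open>U\<^sub>x\<^sub>\<cdot>\<close>.  Full
  support makes this subgradient coercive: moving \<open>U\<close> by \<open>W\<close> raises \<open>G\<close> above its supporting
  hyperplane by at least \<open>c \<bar>W\<^sub>k\<bar>\<close> in each coordinate \<open>k\<close>, because a set of agents of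
  positive mass switches alternatives.  Any other feasible \<open>(U', V')\<close>
  increases \<open>G + H\<close> strictly, so the dual minimiser is this split; and the supremum defining
  \<open>G\<^sup>*\<close> near \<open>\<mu>\<close> is nearly attained at \<open>U\<close>, so \<open>G\<^sup>*\<close> is differentiable at \<open>\<mu>\<close>
  with gradient \<open>U\<close> (and \<open>H\<^sup>*\<close> with gradient \<open>V\<close>).  The same argument applies to each
  \<open>G\<^sub>x\<close> and \<open>H\<^sub>y\<close>, whose domain constraint is inactive because singlehood has positive
  probability.\<close>

section \<open>Coercive subgradients and conjugate functions\<close>

definition subgradient_excess ::
    "(('a::finite \<Rightarrow> real) \<Rightarrow> real) \<Rightarrow> ('a \<Rightarrow> real) \<Rightarrow> ('a \<Rightarrow> real) \<Rightarrow> ('a \<Rightarrow> real) \<Rightarrow> real" where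
  "subgradient_excess f U p W = f (\<lambda>a. U a + W a) - f U - (\<Sum>a\<in>UNIV. p a * W a)"

text \<open>Linear growth of the excess makes the conjugate of \<open>f\<close> differentiable at \<open>p\<close> with gradient
  \<open>U\<close>, and makes \<open>U\<close> the only point where \<open>p\<close> is a subgradient.\<close>
definition coercive_subgradient :: "(('a::finite \<Rightarrow> real) \<Rightarrow> real) \<Rightarrow> ('a \<Rightarrow> real) \<Rightarrow> ('a \<Rightarrow> real) \<Rightarrow> bool" where
  "coercive_subgradient f U p \<longleftrightarrow>
     (\<forall>W. 0 \<le> subgradient_excess f U p W) \<and>
     (\<forall>k \<epsilon>. 0 < \<epsilon> \<longrightarrow> (\<exists>c>0. \<forall>W. \<epsilon> \<le> \<bar>W k\<bar> \<longrightarrow> c * \<bar>W k\<bar> \<le> subgradient_excess f U p W))"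

lemma coercive_subgradient_excess_nonpos:
  assumes "coercive_subgradient f U p" and "subgradient_excess f U p W \<le> 0"
  shows "W k = 0"
proof (rule ccontr)
  assume "W k \<noteq> 0"
  then have "0 < \<bar>W k\<bar>"
    by simp
  then obtain c where "0 < c" and "\<forall>W'. \<bar>W k\<bar> \<le> \<bar>W' k\<bar> \<longrightarrow> c * \<bar>W' k\<bar> \<le> subgradient_excess f U p W'"
    using assms(1) unfolding coercive_subgradient_def by blast
  then have "c * \<bar>W k\<bar> \<le> subgradient_excess f U p W"
    by blast
  moreover have "0 < c * \<bar>W k\<bar>"
    using \<open>0 < c\<close> \<open>0 < \<bar>W k\<bar>\<close> by simp
  ultimately show False
    using assms(2) by linarith
qed

lemma has_real_derivative_squeeze:
  fixes g :: "real \<Rightarrow> real"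
  assumes "\<And>\<epsilon>. 0 < \<epsilon> \<Longrightarrow> \<forall>\<^sub>F t in nhds t0. \<bar>g t - g t0 - (t - t0) * d\<bar> \<le> \<epsilon> * \<bar>t - t0\<bar>"
  shows "(g has_real_derivative d) (at t0)"
  unfolding has_field_derivative_iff
proof (rule tendstoI)
  fix e :: real
  assume "0 < e"
  then have "\<forall>\<^sub>F t in at t0. t \<noteq> t0 \<and> \<bar>g t - g t0 - (t - t0) * d\<bar> \<le> e/2 * \<bar>t - t0\<bar>"
    using assms[of "e/2"] by (simp add: eventually_at_filter eventually_mono)
  then show "\<forall>\<^sub>F t in at t0. dist ((g t - g t0) / (t - t0)) d < e"
  proof (rule eventually_mono)
    fix t
    assume t: "t \<noteq> t0 \<and> \<bar>g t - g t0 - (t - t0) * d\<bar> \<le> e/2 * \<bar>t - t0\<bar>"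
    then have "\<bar>(g t - g t0) / (t - t0) - d\<bar> \<le> e/2"
      by (simp add: field_simps)
    then show "dist ((g t - g t0) / (t - t0)) d < e"
      using \<open>0 < e\<close> by (simp add: dist_real_def)
  qed
qed

definition conjugate :: "(('a \<Rightarrow> real) \<Rightarrow> real) \<Rightarrow> ('a::finite \<Rightarrow> real) \<Rightarrow> ereal" where
  "conjugate f p = (SUP V. ereal ((\<Sum>a\<in>UNIV. p a * V a) - f V))"

lemma sum_fun_upd_mult:
  fixes p U :: "'a::finite \<Rightarrow> real"
  shows "(\<Sum>a\<in>UNIV. (p(k := t)) a * U a) = (\<Sum>a\<in>UNIV. p a * U a) + (t - p k) * U k"
proof -
  have "(\<Sum>a\<in>UNIV. (p(k := t)) a * U a)
      = (\<Sum>a\<in>UNIV. p a * U a + (if a = k then (t - p k) * U k else 0))"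
    by (rule sum.cong) (auto simp: algebra_simps)
  then show ?thesis
    by (simp add: sum.distrib)
qed

lemma conjugate_ge: "ereal ((\<Sum>a\<in>UNIV. p a * U a) - f U) \<le> conjugate f p"
  unfolding conjugate_def by (rule SUP_upper) simp

text \<open>Coercivity forces the supremum defining the conjugate at \<open>p(k := t)\<close> to be nearly attained
  at \<open>U\<close> itself, since any \<open>V\<close> with \<open>\<bar>V k - U k\<bar> \<ge> \<epsilon>\<close> loses at least \<open>c \<bar>V k - U k\<bar>\<close>.\<close>
lemma conjugate_fun_upd_le:
  assumes "coercive_subgradient f U p" and "0 < \<epsilon>"
  shows "\<exists>c>0. \<forall>t. \<bar>t - p k\<bar> \<le> c \<longrightarrow>
    conjugate f (p(k := t)) \<le> ereal ((\<Sum>a\<in>UNIV. p a * U a) - f U + (t - p k) * U k + \<epsilon> * \<bar>t - p k\<bar>)"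
proof -
  obtain c where "0 < c" and c: "\<And>W. \<epsilon> \<le> \<bar>W k\<bar> \<Longrightarrow> c * \<bar>W k\<bar> \<le> subgradient_excess f U p W"
    using assms unfolding coercive_subgradient_def by blast
  have "(\<Sum>a\<in>UNIV. (p(k := t)) a * V a) - f V
      \<le> (\<Sum>a\<in>UNIV. p a * U a) - f U + (t - p k) * U k + \<epsilon> * \<bar>t - p k\<bar>"
    if t: "\<bar>t - p k\<bar> \<le> c" for t V
  proof -
    define W where "W a = V a - U a" for a
    have V: "V = (\<lambda>a. U a + W a)"
      by (auto simp: W_def)
    define B where "B = subgradient_excess f U p W"
    have "0 \<le> B"
      using assms(1) unfolding coercive_subgradient_def B_def by blast
    have "(t - p k) * W k - B \<le> \<epsilon> * \<bar>t - p k\<bar>"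
    proof (cases "\<bar>W k\<bar> < \<epsilon>")
      case True
      have "(t - p k) * W k \<le> \<bar>t - p k\<bar> * \<epsilon>"
        using True abs_ge_self[of "(t - p k) * W k"] mult_left_mono[of "\<bar>W k\<bar>" \<epsilon> "\<bar>t - p k\<bar>"]
        by (simp add: abs_mult)
      then show ?thesis
        using \<open>0 \<le> B\<close> by (simp add: mult.commute)
    next
      case False
      then have "c * \<bar>W k\<bar> \<le> B"
        using c unfolding B_def by simp
      moreover have "(t - p k) * W k \<le> c * \<bar>W k\<bar>"
        using t abs_ge_self[of "(t - p k) * W k"] mult_right_mono[of "\<bar>t - p k\<bar>" c "\<bar>W k\<bar>"]
        by (simp add: abs_mult)
      ultimately show ?thesis
        using \<open>0 < \<epsilon>\<close> by (smt (verit) zero_le_mult_iff abs_ge_zero)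
    qed
    moreover have "(\<Sum>a\<in>UNIV. p a * V a) = (\<Sum>a\<in>UNIV. p a * U a) + (\<Sum>a\<in>UNIV. p a * W a)"
      by (simp add: W_def sum.distrib[symmetric] algebra_simps)
    moreover have "(t - p k) * W k = (t - p k) * V k - (t - p k) * U k"
      by (simp add: W_def algebra_simps)
    ultimately show ?thesis
      unfolding sum_fun_upd_mult B_def subgradient_excess_def V[symmetric] by linarith
  qed
  then show ?thesis
    using \<open>0 < c\<close> unfolding conjugate_def by (intro exI[of _ c]) (auto intro: SUP_least)
qed

lemma has_partial_conjugate:
  assumes sub: "coercive_subgradient f U p"
    and F: "\<forall>\<^sub>F t in nhds (p k). F (p(k := t)) = conjugate f (p(k := t))"
  shows "has_partial F p k (U k)"
proof -
  define C where "C = (\<Sum>a\<in>UNIV. p a * U a) - f U"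
  have low: "ereal (C + (t - p k) * U k) \<le> conjugate f (p(k := t))" for t
    using conjugate_ge[of "p(k := t)" U f] unfolding sum_fun_upd_mult C_def by (simp add: algebra_simps)
  have near: "\<forall>\<^sub>F t in nhds (p k). \<bar>t - p k\<bar> \<le> c" if "0 < c" for c
    using that by (auto simp: eventually_nhds_metric dist_real_def intro!: exI[of _ c])
  have up: "\<forall>\<^sub>F t in nhds (p k). F (p(k := t)) = conjugate f (p(k := t))
      \<and> conjugate f (p(k := t)) \<le> ereal (C + (t - p k) * U k + \<epsilon> * \<bar>t - p k\<bar>)"
    if eps: "0 < \<epsilon>" for \<epsilon>
  proof -
    obtain c where "0 < c" and "\<forall>t. \<bar>t - p k\<bar> \<le> c \<longrightarrow>
        conjugate f (p(k := t)) \<le> ereal (C + (t - p k) * U k + \<epsilon> * \<bar>t - p k\<bar>)"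
      using conjugate_fun_upd_le[OF sub eps, of k] unfolding C_def by blast
    then show ?thesis
      using eventually_conj[OF F near[OF \<open>0 < c\<close>]] by (auto elim: eventually_mono)
  qed
  define g where "g t = real_of_ereal (F (p(k := t)))" for t
  have squeeze: "\<forall>\<^sub>F t in nhds (p k). \<bar>F (p(k := t))\<bar> \<noteq> \<infinity>
      \<and> C + (t - p k) * U k \<le> g t \<and> g t \<le> C + (t - p k) * U k + \<epsilon> * \<bar>t - p k\<bar>"
    if "0 < \<epsilon>" for \<epsilon>
    using up[OF that]
  proof (rule eventually_mono)
    fix t
    assume t: "F (p(k := t)) = conjugate f (p(k := t))
      \<and> conjugate f (p(k := t)) \<le> ereal (C + (t - p k) * U k + \<epsilon> * \<bar>t - p k\<bar>)"
    with low[of t] obtain r where "conjugate f (p(k := t)) = ereal r"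
      by (cases "conjugate f (p(k := t))") auto
    with t low[of t] show "\<bar>F (p(k := t))\<bar> \<noteq> \<infinity>
      \<and> C + (t - p k) * U k \<le> g t \<and> g t \<le> C + (t - p k) * U k + \<epsilon> * \<bar>t - p k\<bar>"
      by (simp add: g_def)
  qed
  have "g (p k) = C"
    using eventually_nhds_x_imp_x[OF squeeze[of 1]] by simp
  have "(g has_real_derivative U k) (at (p k))"
  proof (rule has_real_derivative_squeeze)
    fix \<epsilon> :: real
    assume "0 < \<epsilon>"
    show "\<forall>\<^sub>F t in nhds (p k). \<bar>g t - g (p k) - (t - p k) * U k\<bar> \<le> \<epsilon> * \<bar>t - p k\<bar>"
      using squeeze[OF \<open>0 < \<epsilon>\<close>] by (rule eventually_mono) (auto simp: \<open>g (p k) = C\<close> abs_le_iff)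
  qed
  with squeeze[of 1] show ?thesis
    unfolding has_partial_def g_def by (auto elim: eventually_mono)
qed

lemma has_partial_neg_diff:
  assumes f: "has_partial f p k a" and g: "has_partial g p k b"
  shows "has_partial (\<lambda>q. - f q - g q) p k (- a - b)"
proof -
  have finite: "\<forall>\<^sub>F t in nhds (p k). \<bar>f (p(k := t))\<bar> \<noteq> \<infinity> \<and> \<bar>g (p(k := t))\<bar> \<noteq> \<infinity>"
    using f g unfolding has_partial_def by (simp add: eventually_conj)
  have "((\<lambda>t. - real_of_ereal (f (p(k := t))) - real_of_ereal (g (p(k := t))))
      has_real_derivative (- a - b)) (at (p k))"
    using f g unfolding has_partial_def by (intro DERIV_diff DERIV_minus) auto
  moreover have eq: "\<forall>\<^sub>F t in nhds (p k). real_of_ereal (- f (p(k := t)) - g (p(k := t)))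
      = - real_of_ereal (f (p(k := t))) - real_of_ereal (g (p(k := t)))"
    using finite by (rule eventually_mono) (auto elim!: ereal_cases[of "f _"] ereal_cases[of "g _"])
  ultimately have "((\<lambda>t. real_of_ereal (- f (p(k := t)) - g (p(k := t)))) has_real_derivative (- a - b)) (at (p k))"
    using DERIV_cong_ev[OF refl eq refl] by simp
  moreover have "\<forall>\<^sub>F t in nhds (p k). \<bar>- f (p(k := t)) - g (p(k := t))\<bar> \<noteq> \<infinity>"
    using finite by (rule eventually_mono) (auto elim!: ereal_cases[of "f _"] ereal_cases[of "g _"])
  ultimately show ?thesis
    by (simp add: has_partial_def)
qed

lemma eventually_sum_fun_upd_le_1:
  fixes p :: "'a::finite \<Rightarrow> real"
  assumes "(\<Sum>a\<in>UNIV. p a) < 1"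
  shows "\<forall>\<^sub>F t in nhds (p k). (\<Sum>a\<in>UNIV. (p(k := t)) a) \<le> 1"
proof -
  have "(\<Sum>a\<in>UNIV. (p(k := t)) a) = (\<Sum>a\<in>UNIV. p a) + (t - p k)" for t
    using sum_fun_upd_mult[of p k t "\<lambda>_. 1"] by simp
  then show ?thesis
    using assms unfolding eventually_nhds_metric
    by (intro exI[of _ "1 - (\<Sum>a\<in>UNIV. p a)"]) (auto simp: dist_real_def)
qed

lemma sum_UNIV_prod:
  fixes f :: "'x::finite \<times> 'y::finite \<Rightarrow> 'a::comm_monoid_add"
  shows "(\<Sum>p\<in>UNIV. f p) = (\<Sum>x\<in>UNIV. \<Sum>y\<in>UNIV. f (x, y))"
  by (simp add: sum.cartesian_product UNIV_Times_UNIV[symmetric] del: UNIV_Times_UNIV)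

lemma coercive_subgradient_weighted_sum:
  fixes f :: "'x::finite \<Rightarrow> ('y::finite \<Rightarrow> real) \<Rightarrow> real" and U :: "'x \<times> 'y \<Rightarrow> real"
  assumes n: "\<And>x. 0 < n x" and f: "\<And>x. coercive_subgradient (f x) (\<lambda>y. U (x, y)) (q x)"
  shows "coercive_subgradient (\<lambda>U. \<Sum>x\<in>UNIV. n x * f x (\<lambda>y. U (x, y))) U (\<lambda>(x, y). n x * q x y)"
proof -
  let ?F = "\<lambda>U. \<Sum>x\<in>UNIV. n x * f x (\<lambda>y. U (x, y))"
  let ?E = "\<lambda>W x. subgradient_excess (f x) (\<lambda>y. U (x, y)) (q x) (\<lambda>y. W (x, y))"
  have excess: "subgradient_excess ?F U (\<lambda>(x, y). n x * q x y) W = (\<Sum>x\<in>UNIV. n x * ?E W x)" for W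
    unfolding subgradient_excess_def sum_UNIV_prod
    by (simp add: algebra_simps sum_subtractf sum_distrib_left sum.distrib)
  have nonneg: "0 \<le> n x * ?E W x" for W x
    using n[of x] f[of x] unfolding coercive_subgradient_def by simp
  have ge: "n x * ?E W x \<le> subgradient_excess ?F U (\<lambda>(x, y). n x * q x y) W" for W x
    unfolding excess by (rule member_le_sum) (simp_all add: nonneg)
  show ?thesis
    unfolding coercive_subgradient_def
  proof (intro conjI allI impI)
    show "0 \<le> subgradient_excess ?F U (\<lambda>(x, y). n x * q x y) W" for W
      unfolding excess by (simp add: nonneg sum_nonneg)
    fix k :: "'x \<times> 'y" and \<epsilon> :: real
    assume "0 < \<epsilon>"
    obtain x y where k: "k = (x, y)"
      by (cases k)
    obtain c where "0 < c" and c: "\<forall>w. \<epsilon> \<le> \<bar>w y\<bar> \<longrightarrow> c * \<bar>w y\<bar>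
        \<le> subgradient_excess (f x) (\<lambda>y. U (x, y)) (q x) w"
      using f[of x] \<open>0 < \<epsilon>\<close> unfolding coercive_subgradient_def by blast
    have "n x * c * \<bar>W k\<bar> \<le> subgradient_excess ?F U (\<lambda>(x, y). n x * q x y) W"
      if "\<epsilon> \<le> \<bar>W k\<bar>" for W
    proof -
      have "c * \<bar>W k\<bar> \<le> ?E W x"
        using c[rule_format, of "\<lambda>y. W (x, y)"] that k by simp
      then have "n x * (c * \<bar>W k\<bar>) \<le> n x * ?E W x"
        using n[of x] by (simp add: mult_left_mono)
      then show ?thesis
        using ge[of x W] by (simp add: mult.assoc)
    qed
    moreover have "0 < n x * c"
      using n[of x] \<open>0 < c\<close> by simp
    ultimately show "\<exists>c>0. \<forall>W. \<epsilon> \<le> \<bar>W k\<bar> \<longrightarrow> c * \<bar>W k\<bar> \<le> subgradient_excess ?F U (\<lambda>(x, y). n x * q x y) W"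
      by blast
  qed
qed

lemma coercive_subgradient_swap:
  fixes f :: "('y::finite \<times> 'x::finite \<Rightarrow> real) \<Rightarrow> real"
  assumes "coercive_subgradient f (\<lambda>(y, x). U (x, y)) (\<lambda>(y, x). p (x, y))"
  shows "coercive_subgradient (\<lambda>U. f (\<lambda>(y, x). U (x, y))) U p"
proof -
  have swap: "(\<Sum>q\<in>UNIV. g (snd q, fst q)) = (\<Sum>q\<in>UNIV. g q)" for g :: "'x \<times> 'y \<Rightarrow> real"
    by (rule sum.reindex_bij_witness[of _ prod.swap prod.swap]) auto
  have excess: "subgradient_excess (\<lambda>U. f (\<lambda>(y, x). U (x, y))) U p W
      = subgradient_excess f (\<lambda>(y, x). U (x, y)) (\<lambda>(y, x). p (x, y)) (\<lambda>(y, x). W (x, y))" for W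
    using swap[of "\<lambda>q. p q * W q"] by (simp add: subgradient_excess_def case_prod_beta')
  show ?thesis
    unfolding coercive_subgradient_def excess
  proof (intro conjI allI impI)
    show "0 \<le> subgradient_excess f (\<lambda>(y, x). U (x, y)) (\<lambda>(y, x). p (x, y)) (\<lambda>(y, x). W (x, y))" for W
      using assms by (simp add: coercive_subgradient_def)
    fix k :: "'x \<times> 'y" and \<epsilon> :: real
    assume "0 < \<epsilon>"
    obtain x y where k: "k = (x, y)"
      by (cases k)
    obtain c where "0 < c" and c: "\<forall>W'. \<epsilon> \<le> \<bar>W' (y, x)\<bar> \<longrightarrow>
        c * \<bar>W' (y, x)\<bar> \<le> subgradient_excess f (\<lambda>(y, x). U (x, y)) (\<lambda>(y, x). p (x, y)) W'"
      using assms \<open>0 < \<epsilon>\<close> unfolding coercive_subgradient_def by blast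
    have "c * \<bar>W k\<bar> \<le> subgradient_excess f (\<lambda>(y, x). U (x, y)) (\<lambda>(y, x). p (x, y)) (\<lambda>(y, x). W (x, y))"
      if "\<epsilon> \<le> \<bar>W k\<bar>" for W
      using c[rule_format, of "\<lambda>(y, x). W (x, y)"] that k by simp
    with \<open>0 < c\<close> show "\<exists>c>0. \<forall>W. \<epsilon> \<le> \<bar>W k\<bar> \<longrightarrow>
        c * \<bar>W k\<bar> \<le> subgradient_excess f (\<lambda>(y, x). U (x, y)) (\<lambda>(y, x). p (x, y)) (\<lambda>(y, x). W (x, y))"
      by blast
  qed
qed

lemma optimal_dual_unique:
  fixes G H :: "('a::finite \<Rightarrow> real) \<Rightarrow> real"
  assumes G: "coercive_subgradient G U' \<mu>" and H: "coercive_subgradient H V' \<mu>"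
    and split: "\<And>p. U' p + V' p = \<Phi> p" and nonneg: "\<And>p. 0 \<le> \<mu> p"
    and feasible: "\<And>p. \<Phi> p \<le> U p + V p" and optimal: "G U + H V \<le> G U' + H V'"
  shows "U = U'" and "V = V'"
proof -
  define WU where "WU p = U p - U' p" for p
  define WV where "WV p = V p - V' p" for p
  have "0 \<le> (\<Sum>p\<in>UNIV. \<mu> p * (U p + V p - \<Phi> p))"
    using nonneg feasible by (intro sum_nonneg mult_nonneg_nonneg) (simp_all add: algebra_simps)
  moreover have "(\<Sum>p\<in>UNIV. \<mu> p * (U p + V p - \<Phi> p)) = (\<Sum>p\<in>UNIV. \<mu> p * WU p) + (\<Sum>p\<in>UNIV. \<mu> p * WV p)"
    by (simp add: WU_def WV_def split[symmetric] sum.distrib[symmetric] algebra_simps)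
  moreover have "(\<lambda>p. U' p + WU p) = U" "(\<lambda>p. V' p + WV p) = V"
    by (auto simp: WU_def WV_def)
  ultimately have "subgradient_excess G U' \<mu> WU + subgradient_excess H V' \<mu> WV \<le> 0"
    using optimal by (simp add: subgradient_excess_def)
  moreover have "0 \<le> subgradient_excess G U' \<mu> WU" "0 \<le> subgradient_excess H V' \<mu> WV"
    using G H by (simp_all add: coercive_subgradient_def)
  ultimately have "subgradient_excess G U' \<mu> WU \<le> 0" "subgradient_excess H V' \<mu> WV \<le> 0"
    by linarith+
  then have "WU p = 0" "WV p = 0" for p
    by (simp_all add: coercive_subgradient_excess_nonpos[OF G] coercive_subgradient_excess_nonpos[OF H])
  then show "U = U'" "V = V'"
    by (auto simp: WU_def WV_def)
qed

section \<open>Choice probabilities and the Emax function\<close>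

definition payoff :: "('i \<Rightarrow> real) \<Rightarrow> 'i option \<Rightarrow> real" where
  "payoff U z = (case z of None \<Rightarrow> 0 | Some y \<Rightarrow> U y)"

definition best_payoff :: "('i::finite \<Rightarrow> real) \<Rightarrow> real^('i option) \<Rightarrow> real" where
  "best_payoff U e = Max (range (\<lambda>z. payoff U z + e $ z))"

definition choice_set :: "('i::finite \<Rightarrow> real) \<Rightarrow> 'i option \<Rightarrow> (real^('i option)) set" where
  "choice_set U z = {e. \<forall>z'. z' \<noteq> z \<longrightarrow> payoff U z' + e $ z' < payoff U z + e $ z}"

lemma emax_men_eq_integral: "emax_men D U = integral\<^sup>L D (best_payoff U)"
  by (simp add: emax_men_def best_payoff_def[abs_def] payoff_def)

lemma payoff_add: "payoff (\<lambda>y. U y + W y) z = payoff U z + payoff W z"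
  by (simp add: payoff_def split: option.split)

lemma payoff_le_best_payoff: "payoff U z + e $ z \<le> best_payoff U e"
  unfolding best_payoff_def by (rule Max_ge) auto

lemma best_payoff_attained: "\<exists>z. best_payoff U e = payoff U z + e $ z"
proof -
  have "best_payoff U e \<in> range (\<lambda>z. payoff U z + e $ z)"
    unfolding best_payoff_def by (rule Max_in) auto
  then show ?thesis by auto
qed

lemma abs_best_payoff_le:
  "\<bar>best_payoff U e\<bar> \<le> (\<Sum>z\<in>UNIV. \<bar>payoff U z\<bar>) + Max (range (\<lambda>z. \<bar>e $ z\<bar>))"
proof -
  have Max_ge_abs: "\<bar>e $ z\<bar> \<le> Max (range (\<lambda>z. \<bar>e $ z\<bar>))" for z
    by (rule Max_ge) auto
  obtain z where z: "best_payoff U e = payoff U z + e $ z"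
    using best_payoff_attained by blast
  have "\<bar>payoff U z\<bar> \<le> (\<Sum>z\<in>UNIV. \<bar>payoff U z\<bar>)"
    by (rule member_le_sum) auto
  moreover have "e $ None \<le> best_payoff U e"
    using payoff_le_best_payoff[of U None e] by (simp add: payoff_def)
  moreover have "0 \<le> (\<Sum>z\<in>UNIV. \<bar>payoff U z\<bar>)"
    by (simp add: sum_nonneg)
  moreover note Max_ge_abs[of z] Max_ge_abs[of None]
  ultimately show ?thesis
    using z by (simp only: abs_le_iff) linarith
qed

lemma best_payoff_measurable [measurable]: "best_payoff U \<in> borel_measurable borel"
  unfolding best_payoff_def by measurable

lemma open_choice_set: "open (choice_set U z)"
proof -
  have "choice_set U z = (\<Inter>z'\<in>{z'. z' \<noteq> z}. {e. payoff U z' + e $ z' < payoff U z + e $ z})"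
    by (auto simp: choice_set_def)
  moreover have "open {e::real^_. payoff U z' + e $ z' < payoff U z + e $ z}" for z'
    by (intro open_Collect_less continuous_intros)
  ultimately show ?thesis
    by auto
qed

lemma choice_set_unique: "e \<in> choice_set U z1 \<Longrightarrow> e \<in> choice_set U z2 \<Longrightarrow> z1 = z2"
  unfolding choice_set_def by force

lemma best_payoff_choice_set:
  assumes "e \<in> choice_set U z"
  shows "best_payoff U e = payoff U z + e $ z"
proof -
  obtain z' where z': "best_payoff U e = payoff U z' + e $ z'"
    using best_payoff_attained by blast
  with assms payoff_le_best_payoff[of U z e] have "z' = z"
    unfolding choice_set_def by force
  with z' show ?thesis by simp
qed

lemma choice_set_iff_no_ties:
  assumes "\<forall>a b. a \<noteq> b \<longrightarrow> payoff U a + e $ a \<noteq> payoff U b + e $ b"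
  shows "e \<in> choice_set U z \<longleftrightarrow> (\<forall>z'. payoff U z' + e $ z' \<le> payoff U z + e $ z)"
  using assms unfolding choice_set_def by (auto simp: order.order_iff_strict)

lemma choice_set_exists_no_ties:
  assumes "\<forall>a b. a \<noteq> b \<longrightarrow> payoff U a + e $ a \<noteq> payoff U b + e $ b"
  shows "\<exists>z. e \<in> choice_set U z"
proof -
  obtain z where "best_payoff U e = payoff U z + e $ z"
    using best_payoff_attained by blast
  then have "\<forall>z'. payoff U z' + e $ z' \<le> payoff U z + e $ z"
    by (metis payoff_le_best_payoff)
  then show ?thesis
    using choice_set_iff_no_ties[OF assms] by blast
qed

lemma sum_indicator_choice_set:
  assumes "e \<in> choice_set U z"
  shows "(\<Sum>y\<in>UNIV. indicator (choice_set U (Some y)) e * W y) = payoff W z"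
proof -
  have "(\<Sum>y\<in>UNIV. indicator (choice_set U (Some y)) e * W y) = (\<Sum>y\<in>UNIV. if Some y = z then W y else 0)"
    using assms choice_set_unique by (intro sum.cong) (auto simp: indicator_def)
  also have "\<dots> = payoff W z"
    by (cases z) (auto simp: payoff_def)
  finally show ?thesis .
qed

lemma null_sets_tie:
  fixes a b :: "'o::finite"
  assumes "a \<noteq> b"
  shows "{e::real^'o. e $ a - e $ b = c} \<in> null_sets lborel"
proof -
  let ?d = "axis a 1 - axis b (1::real) :: real^'o"
  have eq: "{e::real^'o. e $ a - e $ b = c} = {x. ?d \<bullet> x = c}"
    by (auto simp: inner_diff_left inner_axis')
  have "negligible {x. ?d \<bullet> x = c}"
    by (metis assms axis_index_axis eq_iff_diff_eq_0 negligible_hyperplane)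
  then show ?thesis
    unfolding eq by (simp add: negligible_iff_null_sets null_sets_completion_iff)
qed

definition regular_distribution :: "(real^('i::finite option)) measure \<Rightarrow> bool" where
  "regular_distribution D \<longleftrightarrow> prob_space D \<and> sets D = sets borel
      \<and> absolutely_continuous lborel D
      \<and> (\<forall>S. open S \<and> S \<noteq> {} \<longrightarrow> 0 < emeasure D S)
      \<and> integrable D (\<lambda>e. Max (range (\<lambda>z. \<bar>e $ z\<bar>)))"

lemma heterogeneity_okD:
  assumes "heterogeneity_ok w D"
  shows "0 < w y" and "regular_distribution (D y)"
  using assms by (simp_all add: heterogeneity_ok_def regular_distribution_def)

definition choice_prob :: "(real^('i::finite option)) measure \<Rightarrow> ('i \<Rightarrow> real) \<Rightarrow> 'i \<Rightarrow> real" where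
  "choice_prob D U y = measure D (choice_set U (Some y))"

definition subgradient_gap :: "('i::finite \<Rightarrow> real) \<Rightarrow> ('i \<Rightarrow> real) \<Rightarrow> real^('i option) \<Rightarrow> real" where
  "subgradient_gap U W e = best_payoff (\<lambda>y. U y + W y) e - best_payoff U e
     - (\<Sum>y\<in>UNIV. indicator (choice_set U (Some y)) e * W y)"

lemma subgradient_gap_ge:
  assumes "e \<in> choice_set U b"
  shows "payoff U a + payoff W a + e $ a - (payoff U b + e $ b) - payoff W b \<le> subgradient_gap U W e"
  using payoff_le_best_payoff[of "\<lambda>y. U y + W y" a e]
  unfolding subgradient_gap_def sum_indicator_choice_set[OF assms] best_payoff_choice_set[OF assms] payoff_add
  by simp

lemma measure_mult_le_integral:
  fixes f :: "'a \<Rightarrow> real"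
  assumes "finite_measure M" "A \<in> sets M" "integrable M f" "0 \<le> c"
    and "AE x in M. 0 \<le> f x" "AE x in M. x \<in> A \<longrightarrow> c \<le> f x"
  shows "measure M A * c \<le> integral\<^sup>L M f"
proof -
  have "integrable M (\<lambda>x. indicator A x * c)"
    using assms(1,2) by (simp add: finite_measure.emeasure_finite less_top[symmetric])
  then have "integral\<^sup>L M (\<lambda>x. indicator A x * c) \<le> integral\<^sup>L M f"
    using assms(3-6) by (intro integral_mono_AE) (auto elim!: eventually_mono simp: indicator_def)
  then show ?thesis
    using assms(2) by (simp add: Int_absorb2 sets.sets_into_space)
qed

context
  fixes D :: "(real^('i::finite option)) measure"
  assumes D: "regular_distribution D"
begin

lemma regular_prob_space: "prob_space D"
  using D by (simp add: regular_distribution_def)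

lemma regular_finite_measure: "finite_measure D"
  using regular_prob_space by (simp add: prob_space_def)

lemma regular_sets: "sets D = sets borel"
  using D by (simp add: regular_distribution_def)

lemma regular_space: "space D = UNIV"
  using sets_eq_imp_space_eq[OF regular_sets] by simp

lemma regular_measure_open_pos: "open S \<Longrightarrow> S \<noteq> {} \<Longrightarrow> 0 < measure D S"
  using D finite_measure.emeasure_eq_measure[OF regular_finite_measure]
  by (simp add: regular_distribution_def)

lemma choice_set_sets: "choice_set U z \<in> sets D"
  unfolding regular_sets by (rule borel_open[OF open_choice_set])

lemma integrable_best_payoff: "integrable D (best_payoff U)"
proof (rule Bochner_Integration.integrable_bound)
  show "integrable D (\<lambda>e. (\<Sum>z\<in>UNIV. \<bar>payoff U z\<bar>) + Max (range (\<lambda>z. \<bar>e $ z\<bar>)))"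
    using D finite_measure.integrable_const[OF regular_finite_measure]
    by (intro Bochner_Integration.integrable_add) (auto simp: regular_distribution_def)
  show "best_payoff U \<in> borel_measurable D"
    using best_payoff_measurable measurable_cong_sets[OF regular_sets refl] by blast
  show "AE e in D. norm (best_payoff U e) \<le> norm ((\<Sum>z\<in>UNIV. \<bar>payoff U z\<bar>) + Max (range (\<lambda>z. \<bar>e $ z\<bar>)))"
  proof (rule AE_I2)
    fix e
    show "norm (best_payoff U e) \<le> norm ((\<Sum>z\<in>UNIV. \<bar>payoff U z\<bar>) + Max (range (\<lambda>z. \<bar>e $ z\<bar>)))"
      using abs_best_payoff_le[of U e] by simp
  qed
qed

text \<open>Absolute continuity enters only here: ties lie on hyperplanes.\<close>
lemma AE_no_ties: "AE e in D. \<forall>a b. a \<noteq> b \<longrightarrow> payoff U a + e $ a \<noteq> payoff U b + e $ b"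
proof -
  have "AE e in D. a \<noteq> b \<longrightarrow> payoff U a + e $ a \<noteq> payoff U b + e $ b" for a b
  proof (cases "a = b")
    case False
    then have "{e. e $ a - e $ b = payoff U b - payoff U a} \<in> null_sets D"
      using null_sets_tie[OF False] D by (auto simp: regular_distribution_def absolutely_continuous_def)
    then show ?thesis
      by (rule AE_I') (auto simp: algebra_simps)
  qed simp
  then have "AE e in D. \<forall>a\<in>UNIV. \<forall>b\<in>UNIV. a \<noteq> b \<longrightarrow> payoff U a + e $ a \<noteq> payoff U b + e $ b"
    by (intro AE_finite_allI) simp_all
  then show ?thesis
    by simp
qed

lemma subgradient_gap_nonneg_AE: "AE e in D. 0 \<le> subgradient_gap U W e"
  using AE_no_ties[of U]
proof (rule eventually_mono)
  fix e
  assume "\<forall>a b. a \<noteq> b \<longrightarrow> payoff U a + e $ a \<noteq> payoff U b + e $ b"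
  then obtain z where "e \<in> choice_set U z"
    using choice_set_exists_no_ties by blast
  then show "0 \<le> subgradient_gap U W e"
    using subgradient_gap_ge[of e U z z W] by simp
qed

lemma integrable_indicator_choice_set: "integrable D (\<lambda>e. indicator (choice_set U z) e * (c::real))"
proof -
  have "integrable D (indicator (choice_set U z) :: _ \<Rightarrow> real)"
    by (rule integrable_real_indicator[OF choice_set_sets])
       (simp add: finite_measure.emeasure_finite[OF regular_finite_measure] less_top[symmetric])
  then show ?thesis
    by simp
qed

lemma integrable_subgradient_gap: "integrable D (subgradient_gap U W)"
  unfolding subgradient_gap_def
  by (intro Bochner_Integration.integrable_diff Bochner_Integration.integrable_sum
      integrable_best_payoff integrable_indicator_choice_set)

lemma integral_subgradient_gap:
  "integral\<^sup>L D (subgradient_gap U W)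
     = subgradient_excess (emax_men D) U (choice_prob D U) W"
proof -
  have "integral\<^sup>L D (\<lambda>e. \<Sum>y\<in>UNIV. indicator (choice_set U (Some y)) e * W y)
      = (\<Sum>y\<in>UNIV. choice_prob D U y * W y)"
    by (subst Bochner_Integration.integral_sum[OF integrable_indicator_choice_set])
       (simp add: choice_prob_def regular_space)
  moreover have "integral\<^sup>L D (subgradient_gap U W)
      = integral\<^sup>L D (best_payoff (\<lambda>y. U y + W y)) - integral\<^sup>L D (best_payoff U)
        - integral\<^sup>L D (\<lambda>e. \<Sum>y\<in>UNIV. indicator (choice_set U (Some y)) e * W y)"
    unfolding subgradient_gap_def
    by (subst Bochner_Integration.integral_diff; (intro Bochner_Integration.integrable_diff
        Bochner_Integration.integrable_sum integrable_best_payoff integrable_indicator_choice_set)?)+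
       (rule refl)
  ultimately show ?thesis
    by (simp add: emax_men_eq_integral subgradient_excess_def)
qed

lemma emax_men_subgradient: "0 \<le> subgradient_excess (emax_men D) U (choice_prob D U) W"
  using integral_nonneg_AE[OF subgradient_gap_nonneg_AE, of U W] integral_subgradient_gap[of U W]
  by simp

lemma choice_set_nonempty: "choice_set U z \<noteq> {}"
proof -
  have "(\<chi> z'. if z' = z then - payoff U z else - payoff U z' - 1) \<in> choice_set U z"
    by (simp add: choice_set_def)
  then show ?thesis
    by blast
qed

lemma sum_choice_prob_less_1: "(\<Sum>y\<in>UNIV. choice_prob D U y) < 1"
proof -
  interpret prob_space D
    by (rule regular_prob_space)
  have "(\<Sum>y\<in>UNIV. choice_prob D U y) = measure D (\<Union>y. choice_set U (Some y))"
    unfolding choice_prob_def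
    by (rule finite_measure_finite_Union[symmetric])
       (auto simp: choice_set_sets disjoint_family_on_def dest: choice_set_unique)
  moreover have "measure D (\<Union>y. choice_set U (Some y)) + measure D (choice_set U None)
      = measure D ((\<Union>y. choice_set U (Some y)) \<union> choice_set U None)"
    by (rule finite_measure_Union[symmetric]) (auto simp: choice_set_sets dest: choice_set_unique)
  moreover have "0 < measure D (choice_set U None)"
    by (rule regular_measure_open_pos[OF open_choice_set choice_set_nonempty])
  ultimately show ?thesis
    using prob_le_1[of "(\<Union>y. choice_set U (Some y)) \<union> choice_set U None"] by linarith
qed

lemma measure_choice_region_pos:
  assumes "a \<noteq> b" "0 < \<delta>"
  shows "0 < measure D (choice_set U b \<inter> {e. payoff U b + e $ b - \<delta> < payoff U a + e $ a})"
proof (rule regular_measure_open_pos)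
  show "open (choice_set U b \<inter> {e. payoff U b + e $ b - \<delta> < payoff U a + e $ a})"
    by (intro open_Int open_choice_set open_Collect_less continuous_intros)
  let ?w = "\<chi> z. if z = b then - payoff U b else if z = a then - payoff U a - \<delta>/2 else - payoff U z - 1"
  have "?w \<in> choice_set U b \<inter> {e. payoff U b + e $ b - \<delta> < payoff U a + e $ a}"
    using assms by (auto simp: choice_set_def)
  then show "choice_set U b \<inter> {e. payoff U b + e $ b - \<delta> < payoff U a + e $ a} \<noteq> {}"
    by blast
qed

lemma emax_men_excess_coercive:
  assumes "0 < \<epsilon>"
  shows "\<exists>c>0. \<forall>W. \<epsilon> \<le> \<bar>W k\<bar> \<longrightarrow>
    c * \<bar>W k\<bar> \<le> subgradient_excess (emax_men D) U (choice_prob D U) W"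
proof -
  define R where "R b a = choice_set U b \<inter> {e. payoff U b + e $ b - \<epsilon>/2 < payoff U a + e $ a}" for b a
  define c where "c = min (measure D (R None (Some k))) (measure D (R (Some k) None)) / 2"
  have "0 < c"
    using measure_choice_region_pos assms by (simp add: c_def R_def)
  moreover have "c * \<bar>W k\<bar> \<le> subgradient_excess (emax_men D) U (choice_prob D U) W"
    if W: "\<epsilon> \<le> \<bar>W k\<bar>" for W
  proof -
    txt \<open>\<open>W\<close> raises one of \<open>Some k\<close>, \<open>None\<close> by \<open>\<bar>W k\<bar>\<close> relative to the other; the agents
      choosing the lowered one but nearly preferring the raised one gain at least \<open>\<bar>W k\<bar> / 2\<close>.\<close>
    obtain a b where ab: "payoff W a - payoff W b = \<bar>W k\<bar>" and R: "2 * c \<le> measure D (R b a)"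
    proof (cases "0 \<le> W k")
      case True
      then show ?thesis
        by (intro that[of "Some k" None]) (auto simp: payoff_def c_def)
    next
      case False
      then show ?thesis
        by (intro that[of None "Some k"]) (auto simp: payoff_def c_def)
    qed
    have "measure D (R b a) * (\<bar>W k\<bar> / 2) \<le> integral\<^sup>L D (subgradient_gap U W)"
    proof (rule measure_mult_le_integral[OF regular_finite_measure])
      show "R b a \<in> sets D"
        unfolding R_def regular_sets
        by (intro borel_open open_Int open_choice_set open_Collect_less continuous_intros)
      show "AE e in D. e \<in> R b a \<longrightarrow> \<bar>W k\<bar> / 2 \<le> subgradient_gap U W e"
      proof (rule AE_I2, rule impI)
        fix e
        assume "e \<in> R b a"
        then have "e \<in> choice_set U b" "payoff U b + e $ b - \<epsilon>/2 < payoff U a + e $ a"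
          by (auto simp: R_def)
        then show "\<bar>W k\<bar> / 2 \<le> subgradient_gap U W e"
          using subgradient_gap_ge[of e U b a W] ab W by linarith
      qed
    qed (simp_all add: integrable_subgradient_gap subgradient_gap_nonneg_AE)
    moreover have "c * \<bar>W k\<bar> \<le> measure D (R b a) * (\<bar>W k\<bar> / 2)"
      using mult_right_mono[OF R, of "\<bar>W k\<bar> / 2"] by simp
    ultimately show ?thesis
      using integral_subgradient_gap[of U W] by linarith
  qed
  ultimately show ?thesis
    by blast
qed

lemma coercive_subgradient_emax_men: "coercive_subgradient (emax_men D) U (choice_prob D U)"
  unfolding coercive_subgradient_def
  using emax_men_subgradient emax_men_excess_coercive by blast

lemma emeasure_weak_choice_set:
  "emeasure D {e. \<forall>z'. payoff U z' + e $ z' \<le> payoff U z + e $ z} = emeasure D (choice_set U z)"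
proof (rule emeasure_eq_AE)
  show "AE e in D. e \<in> {e. \<forall>z'. payoff U z' + e $ z' \<le> payoff U z + e $ z} \<longleftrightarrow> e \<in> choice_set U z"
    using AE_no_ties[of U] by (rule eventually_mono) (simp add: choice_set_iff_no_ties)
  have "closed {e::real^_. \<forall>z'. payoff U z' + e $ z' \<le> payoff U z + e $ z}"
    unfolding Collect_all_eq by (intro closed_INT ballI closed_Collect_le continuous_intros)
  then show "{e. \<forall>z'. payoff U z' + e $ z' \<le> payoff U z + e $ z} \<in> sets D"
    unfolding regular_sets by (rule borel_closed)
qed (rule choice_set_sets)

end

text \<open>Choice probabilities never exhaust the mass (singlehood has positive probability), so
  \<open>Gstar_x D\<close> is the finite conjugate of \<open>emax_men D\<close> on a neighbourhood of them.\<close>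
lemma has_partial_Gstar_x:
  assumes "regular_distribution D"
  shows "has_partial (Gstar_x D) (choice_prob D U) y (U y)"
  using coercive_subgradient_emax_men[OF assms]
proof (rule has_partial_conjugate)
  show "\<forall>\<^sub>F t in nhds (choice_prob D U y).
      Gstar_x D ((choice_prob D U)(y := t)) = conjugate (emax_men D) ((choice_prob D U)(y := t))"
    using eventually_sum_fun_upd_le_1[OF sum_choice_prob_less_1[OF assms]]
    by (rule eventually_mono) (simp add: Gstar_x_def conjugate_def)
qed

section \<open>Group-level Emax functions\<close>

lemma emax_women_eq_emax_men: "emax_women = emax_men"
  by (intro ext) (simp add: emax_women_def emax_men_def)

lemma Hstar_y_eq_Gstar_x: "Hstar_y = Gstar_x"
  by (intro ext) (simp add: Hstar_y_def Gstar_x_def emax_women_eq_emax_men)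

lemma Htot_eq_Gtot_swap: "Htot m Q V = Gtot m Q (\<lambda>(y, x). V (x, y))"
  by (simp add: Gtot_def Htot_def emax_women_eq_emax_men)

lemma Gstar_eq_conjugate: "Gstar n P = conjugate (Gtot n P)"
  by (simp add: fun_eq_iff Gstar_def conjugate_def)

lemma Hstar_eq_conjugate: "Hstar m Q = conjugate (Htot m Q)"
  by (simp add: fun_eq_iff Hstar_def conjugate_def)

lemma coercive_subgradient_Gtot:
  assumes "heterogeneity_ok n P" and "\<And>x y. \<mu> (x, y) = n x * choice_prob (P x) (\<lambda>y. U (x, y)) y"
  shows "coercive_subgradient (Gtot n P) U \<mu>"
proof -
  have "coercive_subgradient (\<lambda>U. \<Sum>x\<in>UNIV. n x * emax_men (P x) (\<lambda>y. U (x, y))) U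
      (\<lambda>(x, y). n x * choice_prob (P x) (\<lambda>y. U (x, y)) y)"
    by (rule coercive_subgradient_weighted_sum[where q = "\<lambda>x. choice_prob (P x) (\<lambda>y. U (x, y))"])
       (simp_all add: heterogeneity_okD[OF assms(1)] coercive_subgradient_emax_men)
  moreover have "\<mu> = (\<lambda>(x, y). n x * choice_prob (P x) (\<lambda>y. U (x, y)) y)"
    using assms(2) by auto
  ultimately show ?thesis
    by (simp add: Gtot_def[abs_def])
qed

lemma coercive_subgradient_Htot:
  assumes "heterogeneity_ok m Q" and "\<And>x y. \<mu> (x, y) = m y * choice_prob (Q y) (\<lambda>x. V (x, y)) x"
  shows "coercive_subgradient (Htot m Q) V \<mu>"
proof -
  have "coercive_subgradient (Gtot m Q) (\<lambda>(y, x). V (x, y)) (\<lambda>(y, x). \<mu> (x, y))"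
    using assms by (intro coercive_subgradient_Gtot) auto
  then show ?thesis
    unfolding Htot_eq_Gtot_swap[abs_def] by (rule coercive_subgradient_swap)
qed

lemma has_partial_Gstar_x_matching:
  assumes "regular_distribution D" and "0 < w" and "\<And>y. \<mu> y = w * choice_prob D U y"
  shows "has_partial (Gstar_x D) (\<lambda>y. \<mu> y / w) y (U y)"
proof -
  have "(\<lambda>y. \<mu> y / w) = choice_prob D U"
    using assms(2,3) by (simp add: fun_eq_iff)
  then show ?thesis
    using has_partial_Gstar_x[OF assms(1)] by simp
qed

section \<open>Stable outcomes\<close>

text \<open>One side of the market in a stable outcome: agents have types distributed as \<open>w \<cdot> D\<close>,
  the couples with a partner of group \<open>i\<close> form the measure \<open>M i\<close>, and \<open>pr\<close> projects a couple to the
  type of its member on this side.  \<open>U\<close> is the systematic part of the utility \<open>u\<close>.\<close>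
locale market_side =
  fixes D :: "(real^('i::finite option)) measure" and w :: real
    and M :: "'i \<Rightarrow> 'b::topological_space measure" and pr :: "'b \<Rightarrow> real^('i option)"
    and u :: "real^('i option) \<Rightarrow> real" and U :: "'i \<Rightarrow> real"
  assumes regular: "regular_distribution D" and weight_pos: "0 < w"
    and finite_M: "\<And>i. finite_measure (M i)" and sets_M: "\<And>i. sets (M i) = sets borel"
    and pr_measurable: "pr \<in> borel_measurable borel"
    and marginal_le: "\<And>A. A \<in> sets borel \<Longrightarrow> (\<Sum>i\<in>UNIV. emeasure (M i) (pr -` A)) \<le> ennreal w * emeasure D A"
    and u_measurable: "u \<in> borel_measurable borel"
    and payoff_le_u: "\<And>z e. payoff U z + e $ z \<le> u e"
    and matched_AE: "\<And>i. AE q in M i. u (pr q) = U i + pr q $ Some i"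
    and unmatched: "ennreal w * emeasure D {e. e $ None < u e}
      = (\<Sum>i\<in>UNIV. emeasure (M i) (pr -` {e. e $ None < u e}))"
begin

lemma space_M: "space (M i) = UNIV"
  using sets_eq_imp_space_eq[OF sets_M[of i]] by simp

lemma mass_le_choice_prob: "emeasure (M j) (space (M j)) \<le> ennreal w * emeasure D (choice_set U (Some j))"
proof -
  define C where "C = {e. \<forall>z'. payoff U z' + e $ z' \<le> payoff U (Some j) + e $ Some j}"
  have "closed C"
    unfolding C_def Collect_all_eq by (intro closed_INT ballI closed_Collect_le continuous_intros)
  then have C: "C \<in> sets borel"
    by (rule borel_closed)
  have "emeasure (M j) (space (M j)) = emeasure (M j) (pr -` C)"
  proof (rule emeasure_eq_AE)
    show "AE q in M j. q \<in> space (M j) \<longleftrightarrow> q \<in> pr -` C"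
      using matched_AE[of j]
    proof (rule eventually_mono)
      fix q
      assume "u (pr q) = U j + pr q $ Some j"
      then have "payoff U z' + pr q $ z' \<le> payoff U (Some j) + pr q $ Some j" for z'
        using payoff_le_u[of z' "pr q"] by (simp add: payoff_def[of U "Some j"])
      then show "q \<in> space (M j) \<longleftrightarrow> q \<in> pr -` C"
        by (simp add: C_def space_M)
    qed
  qed (use measurable_sets[OF pr_measurable C] sets_M in auto)
  also have "\<dots> \<le> (\<Sum>i\<in>UNIV. emeasure (M i) (pr -` C))"
    by (rule member_le_sum) auto
  also have "\<dots> \<le> ennreal w * emeasure D C"
    by (rule marginal_le[OF C])
  also have "emeasure D C = emeasure D (choice_set U (Some j))"
    unfolding C_def by (rule emeasure_weak_choice_set[OF regular])
  finally show ?thesis .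
qed

text \<open>Every agent strictly preferring a partner group over singlehood is matched.\<close>
lemma sum_choice_prob_le_sum_mass:
  "(\<Sum>i\<in>UNIV. ennreal w * emeasure D (choice_set U (Some i))) \<le> (\<Sum>i\<in>UNIV. emeasure (M i) (space (M i)))"
proof -
  define S where "S = {e. e $ None < u e}"
  have S: "S \<in> sets borel"
    unfolding S_def using u_measurable by measurable
  have "choice_set U (Some i) \<subseteq> S" for i
  proof
    fix e
    assume "e \<in> choice_set U (Some i)"
    then have "payoff U None + e $ None < payoff U (Some i) + e $ Some i"
      by (simp add: choice_set_def)
    with payoff_le_u[of "Some i" e] show "e \<in> S"
      by (simp add: S_def payoff_def)
  qed
  then have "(\<Union>i. choice_set U (Some i)) \<subseteq> S"
    by blast
  have "(\<Sum>i\<in>UNIV. emeasure D (choice_set U (Some i))) = emeasure D (\<Union>i. choice_set U (Some i))"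
    by (rule sum_emeasure) (auto simp: choice_set_sets[OF regular] disjoint_family_on_def dest: choice_set_unique)
  also have "\<dots> \<le> emeasure D S"
    using \<open>(\<Union>i. choice_set U (Some i)) \<subseteq> S\<close> S by (intro emeasure_mono) (simp_all add: regular_sets[OF regular])
  finally have "(\<Sum>i\<in>UNIV. ennreal w * emeasure D (choice_set U (Some i))) \<le> ennreal w * emeasure D S"
    using mult_left_mono[of _ _ "ennreal w"] by (simp add: sum_distrib_left[symmetric])
  also have "\<dots> = (\<Sum>i\<in>UNIV. emeasure (M i) (pr -` S))"
    using unmatched unfolding S_def .
  also have "\<dots> \<le> (\<Sum>i\<in>UNIV. emeasure (M i) (space (M i)))"
    by (intro sum_mono emeasure_mono) (auto simp: space_M sets_M)
  finally show ?thesis .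
qed

lemma mass_eq_choice_prob: "measure (M i) (space (M i)) = w * choice_prob D U i"
proof -
  define a where "a i = measure (M i) (space (M i))" for i
  define b where "b i = w * choice_prob D U i" for i
  have a: "emeasure (M i) (space (M i)) = ennreal (a i)" for i
    unfolding a_def by (rule finite_measure.emeasure_eq_measure[OF finite_M])
  have b: "ennreal w * emeasure D (choice_set U (Some i)) = ennreal (b i)" for i
    using finite_measure.emeasure_eq_measure[OF regular_finite_measure[OF regular]] weight_pos
    by (simp add: b_def choice_prob_def ennreal_mult)
  have "0 \<le> a i" "0 \<le> b i" for i
    using weight_pos by (simp_all add: a_def b_def choice_prob_def)
  then have le: "a i \<le> b i" for i
    using mass_le_choice_prob[of i] unfolding a b by simp
  have "sum b UNIV \<le> sum a UNIV"
    using sum_choice_prob_le_sum_mass \<open>\<And>i. 0 \<le> a i\<close> \<open>\<And>i. 0 \<le> b i\<close>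
    unfolding a b by (simp add: sum_nonneg)
  then have "sum a UNIV = sum b UNIV"
    using sum_mono[of UNIV a b] le by simp
  then have "a i = b i"
    using le by (rule sum_mono_inv) simp_all
  then show ?thesis
    by (simp add: a_def b_def)
qed

end

lemma stable_outcomeD:
  assumes "stable_outcome \<Phi> n m P Q \<pi> u v"
  shows "finite_measure (\<pi> x y)" and "sets (\<pi> x y) = sets borel"
    and "A \<in> sets borel \<Longrightarrow> (\<Sum>y\<in>UNIV. emeasure (\<pi> x y) (fst -` A)) \<le> ennreal (n x) * emeasure (P x) A"
    and "B \<in> sets borel \<Longrightarrow> (\<Sum>x\<in>UNIV. emeasure (\<pi> x y) (snd -` B)) \<le> ennreal (m y) * emeasure (Q y) B"
    and "u x \<in> borel_measurable borel" and "v y \<in> borel_measurable borel"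
    and "e $ None \<le> u x e" and "h $ None \<le> v y h"
    and "\<Phi> (x, y) + e $ Some y + h $ Some x \<le> u x e + v y h"
    and "AE q in \<pi> x y. u x (fst q) + v y (snd q) = \<Phi> (x, y) + fst q $ Some y + snd q $ Some x"
    and "ennreal (n x) * emeasure (P x) {e. e $ None < u x e}
      = (\<Sum>y\<in>UNIV. emeasure (\<pi> x y) (fst -` {e. e $ None < u x e}))"
    and "ennreal (m y) * emeasure (Q y) {h. h $ None < v y h}
      = (\<Sum>x\<in>UNIV. emeasure (\<pi> x y) (snd -` {h. h $ None < v y h}))"
  using assms by (simp_all add: stable_outcome_def)

text \<open>Taking \<open>V (x, y) = inf\<^sub>h (v y h - h\<^sub>x)\<close>, both inequalities follow from stability.\<close>
lemma stable_outcome_surplus_split: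
  assumes stable: "stable_outcome \<Phi> n m P Q \<pi> u v"
  obtains U V where "\<And>p. U p + V p = \<Phi> p"
    and "\<And>x y e. U (x, y) + e $ Some y \<le> u x e" and "\<And>x y h. V (x, y) + h $ Some x \<le> v y h"
    and "\<And>x y. AE q in \<pi> x y. u x (fst q) = U (x, y) + fst q $ Some y"
    and "\<And>x y. AE q in \<pi> x y. v y (snd q) = V (x, y) + snd q $ Some x"
proof -
  note S = stable_outcomeD[OF stable]
  define V where "V = (\<lambda>(x, y). INF h. v y h - h $ Some x)"
  define U where "U p = \<Phi> p - V p" for p
  have bdd: "bdd_below (range (\<lambda>h. v y h - h $ Some x))" for x y
  proof (rule bdd_belowI2)
    show "\<Phi> (x, y) - u x 0 \<le> v y h - h $ Some x" for h
      using S(9)[of x y 0 h] by simp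
  qed
  have U: "U (x, y) + e $ Some y \<le> u x e" for x y e
  proof -
    have "\<Phi> (x, y) + e $ Some y - u x e \<le> (INF h. v y h - h $ Some x)"
    proof (rule cINF_greatest)
      show "\<Phi> (x, y) + e $ Some y - u x e \<le> v y h - h $ Some x" for h
        using S(9)[of x y e h] by simp
    qed simp
    then have "\<Phi> (x, y) + e $ Some y - u x e \<le> V (x, y)"
      by (simp add: V_def)
    then show ?thesis
      by (simp add: U_def)
  qed
  have V: "V (x, y) + h $ Some x \<le> v y h" for x y h
    using cINF_lower[OF bdd[where x = x and y = y], of h] by (simp add: V_def)
  have UV: "U p + V p = \<Phi> p" for p
    by (simp add: U_def)
  show thesis
  proof (rule that[OF UV U V])
    fix x y
    have matched: "u x (fst q) = U (x, y) + fst q $ Some y \<and> v y (snd q) = V (x, y) + snd q $ Some x"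
      if "u x (fst q) + v y (snd q) = \<Phi> (x, y) + fst q $ Some y + snd q $ Some x" for q
      using that U[of x y "fst q"] V[of x y "snd q"] UV[of "(x, y)"] by linarith
    show "AE q in \<pi> x y. u x (fst q) = U (x, y) + fst q $ Some y"
      by (rule eventually_mono[OF S(10)[of x y]]) (use matched in blast)
    show "AE q in \<pi> x y. v y (snd q) = V (x, y) + snd q $ Some x"
      by (rule eventually_mono[OF S(10)[of x y]]) (use matched in blast)
  qed
qed

lemma stable_outcome_choice_prob:
  fixes \<pi> :: "'x::finite \<Rightarrow> 'y::finite \<Rightarrow> ((real^('y option)) \<times> (real^('x option))) measure"
  assumes men: "heterogeneity_ok n P" and women: "heterogeneity_ok m Q"
    and stable: "stable_outcome \<Phi> n m P Q \<pi> u v" and mu: "\<mu> = group_matching \<pi>"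
  obtains U V where "\<And>p. U p + V p = \<Phi> p"
    and "\<And>x y. \<mu> (x, y) = n x * choice_prob (P x) (\<lambda>y. U (x, y)) y"
    and "\<And>x y. \<mu> (x, y) = m y * choice_prob (Q y) (\<lambda>x. V (x, y)) x"
proof -
  note S = stable_outcomeD[OF stable]
  obtain U V where UV: "\<And>p. U p + V p = \<Phi> p"
    and U: "\<And>x y e. U (x, y) + e $ Some y \<le> u x e" and V: "\<And>x y h. V (x, y) + h $ Some x \<le> v y h"
    and AE_U: "\<And>x y. AE q in \<pi> x y. u x (fst q) = U (x, y) + fst q $ Some y"
    and AE_V: "\<And>x y. AE q in \<pi> x y. v y (snd q) = V (x, y) + snd q $ Some x"
    using stable_outcome_surplus_split[OF stable] by blast
  have fst: "fst \<in> borel_measurable (borel :: ((real^('y option)) \<times> (real^('x option))) measure)"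
   and snd: "snd \<in> borel_measurable (borel :: ((real^('y option)) \<times> (real^('x option))) measure)"
    by (intro borel_measurable_continuous_onI continuous_intros)+
  have "payoff (\<lambda>y. U (x, y)) z + e $ z \<le> u x e" for x z e
    using S(7) U by (cases z) (simp_all add: payoff_def)
  then have men_side: "market_side (P x) (n x) (\<pi> x) fst (u x) (\<lambda>y. U (x, y))" for x
    by (intro market_side.intro) (simp_all add: heterogeneity_okD[OF men] S fst AE_U)
  have "\<mu> (x, y) = n x * choice_prob (P x) (\<lambda>y. U (x, y)) y" for x y
    using market_side.mass_eq_choice_prob[OF men_side] by (simp add: mu group_matching_def)
  moreover have "payoff (\<lambda>x. V (x, y)) z + h $ z \<le> v y h" for y z h
    using S(8) V by (cases z) (simp_all add: payoff_def)
  then have women_side: "market_side (Q y) (m y) (\<lambda>x. \<pi> x y) snd (v y) (\<lambda>x. V (x, y))" for y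
    by (intro market_side.intro) (simp_all add: heterogeneity_okD[OF women] S snd AE_V)
  have "\<mu> (x, y) = m y * choice_prob (Q y) (\<lambda>x. V (x, y)) x" for x y
    using market_side.mass_eq_choice_prob[OF women_side] by (simp add: mu group_matching_def)
  ultimately show thesis
    by (rule that[OF UV])
qed

lemma optimal_dual_choice_prob:
  fixes \<pi> :: "'x::finite \<Rightarrow> 'y::finite \<Rightarrow> ((real^('y option)) \<times> (real^('x option))) measure"
  assumes men: "heterogeneity_ok n P" and women: "heterogeneity_ok m Q"
    and stable: "stable_outcome \<Phi> n m P Q \<pi> u v" and mu: "\<mu> = group_matching \<pi>"
    and feasible: "\<forall>p. \<Phi> p \<le> U p + V p"
    and optimal: "\<forall>U' V'. (\<forall>p. \<Phi> p \<le> U' p + V' p) \<longrightarrow>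
                     Gtot n P U + Htot m Q V \<le> Gtot n P U' + Htot m Q V'"
  shows "U p + V p = \<Phi> p"
    and "\<mu> (x, y) = n x * choice_prob (P x) (\<lambda>y. U (x, y)) y"
    and "\<mu> (x, y) = m y * choice_prob (Q y) (\<lambda>x. V (x, y)) x"
proof -
  obtain U' V' where split: "\<And>p. U' p + V' p = \<Phi> p"
    and mu_men: "\<And>x y. \<mu> (x, y) = n x * choice_prob (P x) (\<lambda>y. U' (x, y)) y"
    and mu_women: "\<And>x y. \<mu> (x, y) = m y * choice_prob (Q y) (\<lambda>x. V' (x, y)) x"
    using stable_outcome_choice_prob[OF men women stable mu] by metis
  have G: "coercive_subgradient (Gtot n P) U' \<mu>"
    using men mu_men by (rule coercive_subgradient_Gtot)
  have H: "coercive_subgradient (Htot m Q) V' \<mu>"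
    using women mu_women by (rule coercive_subgradient_Htot)
  have "0 \<le> \<mu> p" for p
    by (cases p) (simp add: mu group_matching_def)
  moreover have "Gtot n P U + Htot m Q V \<le> Gtot n P U' + Htot m Q V'"
    using optimal split by simp
  ultimately have "U = U'" and "V = V'"
    using optimal_dual_unique[OF G H split] feasible by blast+
  then show "U p + V p = \<Phi> p"
    and "\<mu> (x, y) = n x * choice_prob (P x) (\<lambda>y. U (x, y)) y"
    and "\<mu> (x, y) = m y * choice_prob (Q y) (\<lambda>x. V (x, y)) x"
    using split mu_men mu_women by simp_all
qed

theorem theorem4:
  fixes \<Phi> :: "'x::finite \<times> 'y::finite \<Rightarrow> real"
    and n :: "'x \<Rightarrow> real" and m :: "'y \<Rightarrow> real"
    and P :: "'x \<Rightarrow> (real^('y option)) measure"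
    and Q :: "'y \<Rightarrow> (real^('x option)) measure"
    and \<pi> :: "'x \<Rightarrow> 'y \<Rightarrow> ((real^('y option)) \<times> (real^('x option))) measure"
    and u :: "'x \<Rightarrow> real^('y option) \<Rightarrow> real" and v :: "'y \<Rightarrow> real^('x option) \<Rightarrow> real"
    and \<mu> U V :: "'x \<times> 'y \<Rightarrow> real"
  assumes men: "heterogeneity_ok n P"
    and women: "heterogeneity_ok m Q"
    and stable: "stable_outcome \<Phi> n m P Q \<pi> u v"
    and mu: "\<mu> = group_matching \<pi>"
    and feasible: "\<forall>p. \<Phi> p \<le> U p + V p"
    and optimal: "\<forall>U' V'. (\<forall>p. \<Phi> p \<le> U' p + V' p) \<longrightarrow>
                     Gtot n P U + Htot m Q V \<le> Gtot n P U' + Htot m Q V'"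
  shows "(\<forall>x y. has_partial (Gstar n P) \<mu> (x, y) (U (x, y))
              \<and> has_partial (Hstar m Q) \<mu> (x, y) (V (x, y)))
       \<and> (\<forall>x y. U (x, y) + V (x, y) = \<Phi> (x, y)
              \<and> has_partial (entropy n m P Q) \<mu> (x, y) (- \<Phi> (x, y))
              \<and> (\<exists>a b. has_partial (Gstar_x (P x)) (\<lambda>y'. \<mu> (x, y') / n x) y a
                     \<and> has_partial (Hstar_y (Q y)) (\<lambda>x'. \<mu> (x', y) / m y) x b
                     \<and> \<Phi> (x, y) = a + b))"
proof -
  note men_ok = heterogeneity_okD[OF men] and women_ok = heterogeneity_okD[OF women]
  note dual = optimal_dual_choice_prob[OF men women stable mu feasible optimal]
  have G: "coercive_subgradient (Gtot n P) U \<mu>" and H: "coercive_subgradient (Htot m Q) V \<mu>"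
    using coercive_subgradient_Gtot[OF men dual(2)] coercive_subgradient_Htot[OF women dual(3)] .
  have pG: "has_partial (Gstar n P) \<mu> k (U k)" and pH: "has_partial (Hstar m Q) \<mu> k (V k)" for k
    unfolding Gstar_eq_conjugate Hstar_eq_conjugate
    by (simp_all add: has_partial_conjugate[OF G] has_partial_conjugate[OF H])
  have pE: "has_partial (entropy n m P Q) \<mu> k (- \<Phi> k)" for k
  proof -
    have "- U k - V k = - \<Phi> k"
      using dual(1)[of k] by linarith
    with has_partial_neg_diff[OF pG pH, of k] show ?thesis
      unfolding entropy_def[abs_def] by simp
  qed
  have px: "has_partial (Gstar_x (P x)) (\<lambda>y'. \<mu> (x, y') / n x) y (U (x, y))" for x y
    by (rule has_partial_Gstar_x_matching[where \<mu> = "\<lambda>y'. \<mu> (x, y')" and U = "\<lambda>y'. U (x, y')"])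
       (simp_all add: men_ok dual(2))
  have py: "has_partial (Hstar_y (Q y)) (\<lambda>x'. \<mu> (x', y) / m y) x (V (x, y))" for x y
    unfolding Hstar_y_eq_Gstar_x
    by (rule has_partial_Gstar_x_matching[where \<mu> = "\<lambda>x'. \<mu> (x', y)" and U = "\<lambda>x'. V (x', y)"])
       (simp_all add: women_ok dual(3))
  show ?thesis
    using pG pH pE px py dual(1) dual(1)[symmetric] by blast
qed

end
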